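(* Let $(L,d)$ be a metric locale without isolated points and let $a\in L$ with $a<1$ and $a^*=0$. Then there exist subsets $B_n\subseteq L$ for $n\in\mathbb{N}=\{1,2,\dots\}$ and, for each $n$ and each $b\in B_n$, elements $g_b,h_b\in L$ with $0\ne g_b\le b$, $0\ne h_b\le b$ and $g_b\wedge h_b=0$, such that for every $n\in\mathbb{N}$: (1$_n$) $d(b)\le \frac{2}{n}$ for every $b\in B_n$; (2$_n$) for every $x\in L$ with $d(x)\le\frac1n$, there is at most one $b\in B_n$ with $x\wedge b\ne0$; (3$_n$) for every $m<n$, every $b\in B_n$ and every $b'\in B_m$, $g_{b'}\wedge b=0=h_{b'}\wedge b$; (4$_n$) $B_n$ is maximal (with respect to inclusion) among subsets $B\subseteq L$ satisfying the conditions (1$_n$)–(3$_n$) with $B$ in place of $B_n$; (5$_n$) for every $b\in B_n$, $a\vee g_b^*=1=a\vee h_b^*$.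
   Context: A frame (locale) $L$ is a complete lattice in which finite meets distribute over arbitrary joins; $a^*$ denotes the pseudocomplement of $a$. A diameter on $L$ is a map $d\colon L\to[0,+\infty]$ with (D1) $d(0)=0$; (D2) $a\le b\Rightarrow d(a)\le d(b)$; (D3) $a\wedge b\neq 0\Rightarrow d(a\vee b)\le d(a)+d(b)$; (D4) for every $\varepsilon>0$, $\bigvee\{a\in L\mid d(a)<\varepsilon\}=1$. Write $b\lhd_\varepsilon a$ if for every $c\in L$ with $d(c)<\varepsilon$, $c\wedge b\ne0$ implies $c\le a$. The diameter is admissible if $a=\bigvee\{b\in L\mid b\lhd_\varepsilon a \text{ for some }\varepsilon>0\}$ for all $a\in L$; a metric locale is a pair $(L,d)$ with $d$ an admissible diameter. A sublocale of $L$ is a subset closed under arbitrary meets such that $x\to s$ lies in it whenever $s$ does ($\to$ the Heyting implication); the open sublocale of $x$ is $\mathfrak{o}(x)=\{x\to y\mid y\in L\}$. A point of $L$ is $p\ne1$ such that $x\wedge y\le p$ implies $x\le p$ or $y\le p$; it is isolated if the sublocale $\{1,p\}$ equals $\mathfrak{o}(x)$ for some $x\in L$. *)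

theory Defs
  imports Complex_Main "HOL-Library.Extended_Nonnegative_Real"
begin

definition frame :: "'a::complete_lattice itself \<Rightarrow> bool" where
  "frame _ \<longleftrightarrow> (\<forall>(a::'a) S. inf a (Sup S) = Sup ((\<lambda>s. inf a s) ` S))"

definition pseudocompl :: "'a::complete_lattice \<Rightarrow> 'a" where
  "pseudocompl a = Sup {x. inf x a = bot}"

definition himp :: "'a::complete_lattice \<Rightarrow> 'a \<Rightarrow> 'a" where
  "himp x y = Sup {z. inf z x \<le> y}"

definition diameter :: "('a::complete_lattice \<Rightarrow> ennreal) \<Rightarrow> bool" where
  "diameter d \<longleftrightarrow>
     d bot = 0 \<and>
     (\<forall>a b. a \<le> b \<longrightarrow> d a \<le> d b) \<and>
     (\<forall>a b. inf a b \<noteq> bot \<longrightarrow> d (sup a b) \<le> d a + d b) \<and>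
     (\<forall>\<epsilon>::real. \<epsilon> > 0 \<longrightarrow> Sup {a. d a < ennreal \<epsilon>} = top)"

definition uniformly_below :: "('a::complete_lattice \<Rightarrow> ennreal) \<Rightarrow> real \<Rightarrow> 'a \<Rightarrow> 'a \<Rightarrow> bool" where
  "uniformly_below d \<epsilon> b a \<longleftrightarrow>
     (\<forall>c. d c < ennreal \<epsilon> \<longrightarrow> inf c b \<noteq> bot \<longrightarrow> c \<le> a)"

definition admissible :: "('a::complete_lattice \<Rightarrow> ennreal) \<Rightarrow> bool" where
  "admissible d \<longleftrightarrow>
     (\<forall>a. a = Sup {b. \<exists>\<epsilon>::real. \<epsilon> > 0 \<and> uniformly_below d \<epsilon> b a})"

definition metric_locale :: "('a::complete_lattice \<Rightarrow> ennreal) \<Rightarrow> bool" where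
  "metric_locale d \<longleftrightarrow> frame TYPE('a) \<and> diameter d \<and> admissible d"

definition sublocale_of :: "'a::complete_lattice set \<Rightarrow> bool" where
  "sublocale_of S \<longleftrightarrow> (\<forall>T. T \<subseteq> S \<longrightarrow> Inf T \<in> S) \<and> (\<forall>x s. s \<in> S \<longrightarrow> himp x s \<in> S)"

definition open_sublocale :: "'a::complete_lattice \<Rightarrow> 'a set" where
  "open_sublocale x = {himp x y | y. True}"

definition is_point :: "'a::complete_lattice \<Rightarrow> bool" where
  "is_point p \<longleftrightarrow> p \<noteq> top \<and> (\<forall>x y. inf x y \<le> p \<longrightarrow> x \<le> p \<or> y \<le> p)"

definition isolated_point :: "'a::complete_lattice \<Rightarrow> bool" where
  "isolated_point p \<longleftrightarrow> is_point p \<and> (\<exists>x. {top, p} = open_sublocale x)"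

definition no_isolated_points :: "'a::complete_lattice itself \<Rightarrow> bool" where
  "no_isolated_points _ \<longleftrightarrow> (\<forall>p::'a. \<not> isolated_point p)"

end

theory Submission
  imports Defs
begin

text \<open>Since \<open>a\<close> is dense, every nonzero \<open>b\<close> meets \<open>a\<close>, and admissibility of \<open>d\<close> gives a
  nonzero \<open>e\<close> rather below \<open>inf b a\<close>. The pseudocomplement of an atom is an isolated point, so
  there are no atoms and \<open>e\<close> contains two disjoint nonzero elements \<open>g\<close>, \<open>h\<close>; being below
  \<open>e\<close>, both are rather below \<open>a\<close>, which is condition (5). The families \<open>B n\<close> are then
  chosen by recursion on \<open>n\<close>: conditions (1)--(3) only constrain single members and pairs of
  members of \<open>B n\<close> (given the earlier \<open>B m\<close>), so they are preserved under unions of chains and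
  Zorn's lemma yields a maximal such family.\<close>

lemma frame_inf_Sup: "frame TYPE('a::complete_lattice) \<Longrightarrow> inf (x::'a) (Sup S) = (SUP s\<in>S. inf x s)"
  unfolding frame_def by blast

lemma frame_inf_sup:
  "frame TYPE('a::complete_lattice) \<Longrightarrow> inf (x::'a) (sup y z) = sup (inf x y) (inf x z)"
  using frame_inf_Sup[of x "{y, z}"] by simp

lemma inf_pseudocompl: "frame TYPE('a::complete_lattice) \<Longrightarrow> inf (x::'a) (pseudocompl x) = bot"
  by (simp add: pseudocompl_def frame_inf_Sup inf_commute)

lemma le_pseudocompl_iff:
  assumes "frame TYPE('a::complete_lattice)"
  shows "(y::'a) \<le> pseudocompl x \<longleftrightarrow> inf y x = bot"
proof
  assume "y \<le> pseudocompl x"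
  then have "inf y x \<le> inf (pseudocompl x) x" by (rule inf_mono) simp
  then show "inf y x = bot" using inf_pseudocompl[OF assms, of x] by (metis inf_commute le_bot)
qed (simp add: pseudocompl_def Sup_upper)

lemma pseudocompl_antimono: "(x::'a::complete_lattice) \<le> y \<Longrightarrow> pseudocompl y \<le> pseudocompl x"
  unfolding pseudocompl_def
proof (rule Sup_subset_mono, safe)
  fix z assume "x \<le> y" "inf z y = bot"
  then show "inf z x = bot" by (metis inf.absorb_iff2 inf_assoc inf_bot_left)
qed

text \<open>The relation \<open>x \<prec> y\<close> of frame theory; condition (5) of the theorem says that
  \<open>g b\<close> and \<open>h b\<close> are rather below \<open>a\<close>.\<close>

definition rather_below :: "'a::complete_lattice \<Rightarrow> 'a \<Rightarrow> bool" where
  "rather_below x y \<longleftrightarrow> sup (pseudocompl x) y = top"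

lemma rather_below_le:
  assumes "frame TYPE('a::complete_lattice)" and "rather_below (x::'a) y"
  shows "x \<le> y"
proof -
  have "x = inf x (sup (pseudocompl x) y)"
    using assms(2) by (simp add: rather_below_def)
  also have "\<dots> = inf x y"
    by (simp add: frame_inf_sup[OF assms(1)] inf_pseudocompl[OF assms(1)])
  finally show ?thesis by (metis inf.cobounded2)
qed

lemma rather_below_mono:
  "(x::'a::complete_lattice) \<le> x' \<Longrightarrow> rather_below x' y' \<Longrightarrow> y' \<le> y \<Longrightarrow> rather_below x y"
  unfolding rather_below_def by (metis pseudocompl_antimono sup_mono top_unique)

text \<open>By (D4) the elements of diameter below \<open>\<epsilon>\<close> cover \<open>top\<close>, and each of them either
  misses \<open>x\<close>, hence lies below \<open>pseudocompl x\<close>, or lies below \<open>y\<close>.\<close>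

lemma uniformly_below_imp_rather_below:
  assumes "diameter d" and "\<epsilon> > 0" and "uniformly_below d \<epsilon> x y"
  shows "rather_below x y"
proof -
  have "Sup {c. d c < ennreal \<epsilon>} \<le> sup (pseudocompl x) y"
  proof (rule Sup_least)
    fix c assume "c \<in> {c. d c < ennreal \<epsilon>}"
    then have "inf c x = bot \<or> c \<le> y"
      using assms(3) by (auto simp: uniformly_below_def)
    then show "c \<le> sup (pseudocompl x) y"
      by (auto simp: pseudocompl_def intro: Sup_upper le_supI1 le_supI2)
  qed
  moreover have "Sup {c. d c < ennreal \<epsilon>} = top"
    using assms(1,2) by (simp add: diameter_def)
  ultimately show ?thesis by (simp add: rather_below_def top_unique)
qed

lemma admissible_exists_rather_below:
  fixes d :: "'a::complete_lattice \<Rightarrow> ennreal" and y :: 'a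
  assumes "diameter d" and "admissible d" and "y \<noteq> bot"
  shows "\<exists>x. x \<noteq> bot \<and> rather_below x y"
proof -
  let ?X = "{x. \<exists>\<epsilon>::real. \<epsilon> > 0 \<and> uniformly_below d \<epsilon> x y}"
  have "Sup ?X \<noteq> bot"
    using assms(2,3) unfolding admissible_def by metis
  then obtain x \<epsilon> where "x \<noteq> bot" "\<epsilon> > 0" "uniformly_below d \<epsilon> x y"
    unfolding Sup_bot_conv by blast
  then show ?thesis using uniformly_below_imp_rather_below[OF assms(1)] by blast
qed

lemma atom_dichotomy:
  assumes "\<And>x. x \<le> (e::'a::complete_lattice) \<Longrightarrow> x = bot \<or> x = e"
  shows "e \<le> y \<or> inf e y = bot"
  using assms[OF inf.cobounded1, of y] by (metis le_iff_inf)

lemma himp_atom: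
  assumes "\<And>x. x \<le> (e::'a::complete_lattice) \<Longrightarrow> x = bot \<or> x = e"
  shows "himp e y = (if e \<le> y then top else pseudocompl e)"
proof (cases "e \<le> y")
  case True
  then have "{z. inf z e \<le> y} = UNIV" by (auto intro: le_infI2)
  with True show ?thesis by (simp add: himp_def)
next
  case False
  then have "inf e y = bot" using atom_dichotomy[OF assms] by blast
  then have "inf z e \<le> y \<longleftrightarrow> inf z e = bot" for z
    by (metis inf.bounded_iff inf.cobounded2 le_bot bot_least)
  with False show ?thesis by (simp add: himp_def pseudocompl_def)
qed

lemma isolated_point_pseudocompl_atom:
  assumes frame: "frame TYPE('a::complete_lattice)"
    and "(e::'a) \<noteq> bot" and atom: "\<And>x. x \<le> e \<Longrightarrow> x = bot \<or> x = e"
  shows "isolated_point (pseudocompl e)"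
proof -
  have le_iff: "x \<le> pseudocompl e \<longleftrightarrow> \<not> e \<le> x" for x
  proof (intro iffI notI)
    assume "x \<le> pseudocompl e" "e \<le> x"
    then have "e \<le> pseudocompl e" by (metis order_trans)
    then show False
      using assms(2) inf_pseudocompl[OF frame, of e] by (simp add: inf.absorb1)
  next
    assume "\<not> e \<le> x"
    then show "x \<le> pseudocompl e"
      using atom_dichotomy[OF atom, of x] by (simp add: le_pseudocompl_iff[OF frame] inf_commute)
  qed
  have "is_point (pseudocompl e)"
    unfolding is_point_def
  proof (intro conjI allI impI)
    show "pseudocompl e \<noteq> top"
      using le_iff[of top] by (metis order_refl top_greatest)
    fix x y assume "inf x y \<le> pseudocompl e"
    then show "x \<le> pseudocompl e \<or> y \<le> pseudocompl e"
      unfolding le_iff by simp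
  qed
  moreover have "open_sublocale e = {top, pseudocompl e}"
  proof -
    have "himp e y \<in> {top, pseudocompl e}" for y
      by (simp add: himp_atom[OF atom])
    moreover have "top = himp e top" "pseudocompl e = himp e bot"
      using assms(2) by (simp_all add: himp_atom[OF atom] bot_unique)
    ultimately show ?thesis
      unfolding open_sublocale_def by auto
  qed
  ultimately show ?thesis by (auto simp: isolated_point_def)
qed

lemma no_isolated_points_exists_proper_below:
  assumes "frame TYPE('a::complete_lattice)" and "no_isolated_points TYPE('a)" and "(e::'a) \<noteq> bot"
  shows "\<exists>x. x \<noteq> bot \<and> x \<le> e \<and> x \<noteq> e"
proof (rule ccontr)
  assume "\<not> ?thesis"
  then have "isolated_point (pseudocompl e)"
    by (intro isolated_point_pseudocompl_atom[OF assms(1,3)]) blast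
  with assms(2) show False
    by (simp add: no_isolated_points_def)
qed

lemma exists_disjoint_pair_below:
  fixes d :: "'a::complete_lattice \<Rightarrow> ennreal" and e :: 'a
  assumes "metric_locale d" and "no_isolated_points TYPE('a)" and "e \<noteq> bot"
  shows "\<exists>x y. x \<noteq> bot \<and> x \<le> e \<and> y \<noteq> bot \<and> y \<le> e \<and> inf x y = bot"
proof -
  have frame: "frame TYPE('a)" and "diameter d" "admissible d"
    using assms(1) by (simp_all add: metric_locale_def)
  obtain f where f: "f \<noteq> bot" "f \<le> e" "f \<noteq> e"
    using no_isolated_points_exists_proper_below[OF frame assms(2,3)] by blast
  obtain k where k: "k \<noteq> bot" "rather_below k f"
    using admissible_exists_rather_below[OF \<open>diameter d\<close> \<open>admissible d\<close> f(1)] by blast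
  have "e = inf e (sup (pseudocompl k) f)"
    using k(2) by (simp add: rather_below_def)
  also have "\<dots> = sup (inf e (pseudocompl k)) f"
    using f(2) by (simp add: frame_inf_sup[OF frame] inf.absorb2)
  finally have "inf e (pseudocompl k) \<noteq> bot"
    using f(3) by (metis sup_bot_left)
  moreover have "k \<le> e"
    using rather_below_le[OF frame k(2)] f(2) by (rule order_trans)
  moreover have "inf k (inf e (pseudocompl k)) = bot"
    using inf_pseudocompl[OF frame, of k] by (simp add: inf_left_commute[of k])
  ultimately show ?thesis
    using k(1) by (intro exI[of _ k] exI[of _ "inf e (pseudocompl k)"]) simp
qed

lemma dense_exists_disjoint_pair_rather_below:
  fixes d :: "'a::complete_lattice \<Rightarrow> ennreal" and a b :: 'a
  assumes "metric_locale d" and "no_isolated_points TYPE('a)"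
    and "pseudocompl a = bot" and "b \<noteq> bot"
  shows "\<exists>g h. g \<noteq> bot \<and> g \<le> b \<and> h \<noteq> bot \<and> h \<le> b \<and> inf g h = bot \<and>
    rather_below g a \<and> rather_below h a"
proof -
  have frame: "frame TYPE('a)" and "diameter d" "admissible d"
    using assms(1) by (simp_all add: metric_locale_def)
  have "inf b a \<noteq> bot"
    using assms(3,4) le_pseudocompl_iff[OF frame, of b a] by (auto simp: bot_unique)
  then obtain e where e: "e \<noteq> bot" "rather_below e (inf b a)"
    using admissible_exists_rather_below[OF \<open>diameter d\<close> \<open>admissible d\<close>] by blast
  have "e \<le> b"
    using rather_below_le[OF frame e(2)] by simp
  obtain g h where gh: "g \<noteq> bot" "g \<le> e" "h \<noteq> bot" "h \<le> e" "inf g h = bot"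
    using exists_disjoint_pair_below[OF assms(1,2) e(1)] by blast
  have "rather_below g a" "rather_below h a"
    using rather_below_mono[OF _ e(2) inf.cobounded2] gh(2,4) by blast+
  moreover have "g \<le> b" "h \<le> b"
    using gh(2,4) \<open>e \<le> b\<close> by (blast intro: order_trans)+
  ultimately show ?thesis
    using gh(1,3,5) by blast
qed

lemma exists_maximal_set_pointwise_pairwise:
  "\<exists>M. (\<forall>x\<in>M. p x) \<and> (\<forall>x\<in>M. \<forall>y\<in>M. r x y) \<and>
     (\<forall>C. M \<subseteq> C \<longrightarrow> (\<forall>x\<in>C. p x) \<longrightarrow> (\<forall>x\<in>C. \<forall>y\<in>C. r x y) \<longrightarrow> C = M)"
proof -
  let ?A = "{C. (\<forall>x\<in>C. p x) \<and> (\<forall>x\<in>C. \<forall>y\<in>C. r x y)}"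
  have "\<forall>\<C>\<in>chains ?A. \<Union>\<C> \<in> ?A"
  proof
    fix \<C> assume "\<C> \<in> chains ?A"
    have "\<exists>C\<in>\<C>. x \<in> C \<and> y \<in> C" if "x \<in> \<Union>\<C>" "y \<in> \<Union>\<C>" for x y
      using that chainsD[OF \<open>\<C> \<in> chains ?A\<close>] by blast
    then show "\<Union>\<C> \<in> ?A"
      using chainsD2[OF \<open>\<C> \<in> chains ?A\<close>] by fast
  qed
  from Zorn_Lemma[OF this] obtain M where "M \<in> ?A" and "\<forall>C\<in>?A. M \<subseteq> C \<longrightarrow> C = M"
    by blast
  then show ?thesis
    by (intro exI[of _ M]) (simp only: mem_Collect_eq, blast)
qed

lemma dependent_choice_nat_history:
  fixes P :: "nat \<Rightarrow> (nat \<Rightarrow> 'a) \<Rightarrow> 'a \<Rightarrow> bool"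
  assumes ex: "\<And>n X. \<exists>x. P n X x"
    and history: "\<And>n X Y. (\<And>m. m < n \<Longrightarrow> X m = Y m) \<Longrightarrow> P n X = P n Y"
  shows "\<exists>X. \<forall>n. P n X (X n)"
proof -
  \<comment> \<open>\<open>F k\<close> records the first \<open>k\<close> choices.\<close>
  define F :: "nat \<Rightarrow> nat \<Rightarrow> 'a"
    where "F = rec_nat (\<lambda>_. undefined) (\<lambda>n F. F(n := SOME x. P n F x))"
  have F_Suc: "F (Suc n) = (F n)(n := SOME x. P n (F n) x)" for n
    by (simp add: F_def)
  define X where "X n = F (Suc n) n" for n
  have F_X: "F k m = X m" if "m < k" for k m
    using that by (induction k) (auto simp: F_Suc X_def less_Suc_eq)
  have "P n (F n) (X n)" for n
    using someI_ex[OF ex] by (simp add: X_def F_Suc)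
  moreover have "P n (F n) = P n X" for n
    by (rule history) (simp add: F_X)
  ultimately have "P n X (X n)" for n
    by simp
  then show ?thesis by blast
qed

lemma exists_sequence_of_maximal_sets:
  fixes P :: "nat \<Rightarrow> (nat \<Rightarrow> 'a set) \<Rightarrow> 'a \<Rightarrow> bool" and R :: "nat \<Rightarrow> 'a \<Rightarrow> 'a \<Rightarrow> bool"
  assumes history: "\<And>n B B'. (\<And>m. m < n \<Longrightarrow> B m = B' m) \<Longrightarrow> P n B = P n B'"
  shows "\<exists>B. \<forall>n. (\<forall>b\<in>B n. P n B b) \<and> (\<forall>b\<in>B n. \<forall>b'\<in>B n. R n b b') \<and>
    (\<forall>C. B n \<subseteq> C \<longrightarrow> (\<forall>b\<in>C. P n B b) \<longrightarrow> (\<forall>b\<in>C. \<forall>b'\<in>C. R n b b') \<longrightarrow> C = B n)"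
  by (rule dependent_choice_nat_history[OF exists_maximal_set_pointwise_pairwise]) (drule history, simp)

definition maximal_separated_family ::
    "('a::complete_lattice \<Rightarrow> ennreal) \<Rightarrow> ('a \<Rightarrow> 'a) \<Rightarrow> ('a \<Rightarrow> 'a) \<Rightarrow> (nat \<Rightarrow> 'a set) \<Rightarrow> nat \<Rightarrow> bool"
  where "maximal_separated_family d g h B n \<longleftrightarrow>
    (\<forall>b\<in>B n. b \<noteq> bot \<and> d b \<le> ennreal (2 / real n)) \<and>
    (\<forall>x. d x \<le> ennreal (1 / real n) \<longrightarrow>
       (\<forall>b\<in>B n. \<forall>b'\<in>B n. inf x b \<noteq> bot \<longrightarrow> inf x b' \<noteq> bot \<longrightarrow> b = b')) \<and>
    (\<forall>m. 1 \<le> m \<longrightarrow> m < n \<longrightarrow>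
       (\<forall>b\<in>B n. \<forall>b'\<in>B m. inf (g b') b = bot \<and> inf (h b') b = bot)) \<and>
    (\<forall>C. B n \<subseteq> C \<longrightarrow> bot \<notin> C \<longrightarrow>
       (\<forall>b\<in>C. d b \<le> ennreal (2 / real n)) \<longrightarrow>
       (\<forall>x. d x \<le> ennreal (1 / real n) \<longrightarrow>
          (\<forall>b\<in>C. \<forall>b'\<in>C. inf x b \<noteq> bot \<longrightarrow> inf x b' \<noteq> bot \<longrightarrow> b = b')) \<longrightarrow>
       (\<forall>m. 1 \<le> m \<longrightarrow> m < n \<longrightarrow>
          (\<forall>b\<in>C. \<forall>b'\<in>B m. inf (g b') b = bot \<and> inf (h b') b = bot)) \<longrightarrow>
       C = B n)"

lemma exists_maximal_separated_families:
  "\<exists>B. \<forall>n. maximal_separated_family d g h B n"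
proof -
  define fits where "fits n B b \<longleftrightarrow> b \<noteq> bot \<and> d b \<le> ennreal (2 / real n) \<and>
    (\<forall>m. 1 \<le> m \<longrightarrow> m < n \<longrightarrow> (\<forall>b'\<in>B m. inf (g b') b = bot \<and> inf (h b') b = bot))"
    for n and B :: "nat \<Rightarrow> 'a set" and b
  define separated where "separated n b b' \<longleftrightarrow>
    (\<forall>x. d x \<le> ennreal (1 / real n) \<longrightarrow> inf x b \<noteq> bot \<longrightarrow> inf x b' \<noteq> bot \<longrightarrow> b = b')"
    for n and b b' :: 'a
  have history: "fits n B = fits n B'" if "\<And>m. m < n \<Longrightarrow> B m = B' m" for n B B'
    using that by (auto simp: fits_def fun_eq_iff)
  obtain B where B: "\<forall>n. (\<forall>b\<in>B n. fits n B b) \<and> (\<forall>b\<in>B n. \<forall>b'\<in>B n. separated n b b') \<and>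
    (\<forall>C. B n \<subseteq> C \<longrightarrow> (\<forall>b\<in>C. fits n B b) \<longrightarrow> (\<forall>b\<in>C. \<forall>b'\<in>C. separated n b b') \<longrightarrow> C = B n)"
    using exists_sequence_of_maximal_sets[of fits separated, OF history] by (rule exE)
  note B_fits = B[THEN spec, THEN conjunct1, rule_format]
    and B_separated = B[THEN spec, THEN conjunct2, THEN conjunct1, rule_format]
    and B_maximal = B[THEN spec, THEN conjunct2, THEN conjunct2, rule_format]
  show ?thesis
    unfolding maximal_separated_family_def
    by (intro exI[of _ B] allI conjI impI ballI B_maximal)
      (auto dest: B_fits B_separated simp: fits_def separated_def)
qed

theorem proposition5p2:
  fixes d :: "'a::complete_lattice \<Rightarrow> ennreal" and a :: 'a
  assumes "metric_locale d"
    and "no_isolated_points TYPE('a)"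
    and "a < top"
    and "pseudocompl a = bot"
  shows "\<exists>(B :: nat \<Rightarrow> 'a set) (g :: 'a \<Rightarrow> 'a) (h :: 'a \<Rightarrow> 'a).
    (\<forall>n\<ge>1. \<forall>b\<in>B n. g b \<noteq> bot \<and> g b \<le> b \<and> h b \<noteq> bot \<and> h b \<le> b \<and> inf (g b) (h b) = bot) \<and>
    (\<forall>n\<ge>1.
      (\<forall>b\<in>B n. d b \<le> ennreal (2 / real n)) \<and>
      (\<forall>x. d x \<le> ennreal (1 / real n) \<longrightarrow>
           (\<forall>b\<in>B n. \<forall>b'\<in>B n. inf x b \<noteq> bot \<longrightarrow> inf x b' \<noteq> bot \<longrightarrow> b = b')) \<and>
      (\<forall>m. 1 \<le> m \<longrightarrow> m < n \<longrightarrow> (\<forall>b\<in>B n. \<forall>b'\<in>B m.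
           inf (g b') b = bot \<and> inf (h b') b = bot)) \<and>
      (\<forall>C. B n \<subseteq> C \<longrightarrow> bot \<notin> C \<longrightarrow>
           (\<forall>b\<in>C. d b \<le> ennreal (2 / real n)) \<longrightarrow>
           (\<forall>x. d x \<le> ennreal (1 / real n) \<longrightarrow>
              (\<forall>b\<in>C. \<forall>b'\<in>C. inf x b \<noteq> bot \<longrightarrow> inf x b' \<noteq> bot \<longrightarrow> b = b')) \<longrightarrow>
           (\<forall>m. 1 \<le> m \<longrightarrow> m < n \<longrightarrow> (\<forall>b\<in>C. \<forall>b'\<in>B m.
              inf (g b') b = bot \<and> inf (h b') b = bot)) \<longrightarrow>
           C = B n) \<and>
      (\<forall>b\<in>B n. sup a (pseudocompl (g b)) = top \<and> sup a (pseudocompl (h b)) = top))"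
proof -
  obtain g h where gh: "\<And>b. b \<noteq> bot \<Longrightarrow> g b \<noteq> bot \<and> g b \<le> b \<and> h b \<noteq> bot \<and> h b \<le> b \<and>
      inf (g b) (h b) = bot \<and> rather_below (g b) a \<and> rather_below (h b) a"
    using dense_exists_disjoint_pair_rather_below[OF assms(1,2,4)] by metis
  obtain B where B: "\<And>n. maximal_separated_family d g h B n"
    using exists_maximal_separated_families by blast
  show ?thesis
    by (rule exI[of _ B], rule exI[of _ g], rule exI[of _ h])
      (use B gh in \<open>simp add: maximal_separated_family_def rather_below_def sup_commute\<close>)
qed

end
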